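(* Under the setting below, let $(x^*,z^*,s^* )$ with multiplier $\lambda^*$ for (C) (and nonnegative multipliers for the other constraints) be a KKT point of (P). Then for every $t$ with $(\beta_t,\theta_t)\in\Omega^{IV}_t(\lambda^* )$ we have $(x_t^*,z_t^* )=(x^{IV}_t(\lambda^* ),0)$, where $x^{IV}_t(\lambda)\in(0,1]$ satisfies $\theta_t u_t'(x^{IV}_t(\lambda))-\beta_t c_t e_t'(x^{IV}_t(\lambda)c_t)=d_t\lambda$, and $\Omega^{IV}_t(\lambda)=\Big\{(\beta,\theta):\beta>0,\ \theta<\frac{X_t(\lambda)}{u_t'(a_t(\beta,\lambda))},\ \theta\le\frac{\beta c_te_t'(c_t)+d_t\lambda}{u_t'(1)}\Big\}$.
   Context: Fix an integer $T\ge 1$, a data cap $Q>0$ and an overage fee $\pi>0$. For each $t\in\{1,\dots,T\}$ fix reals $d_t\ge 0$, $r_t\ge 0$, $c_t>0$, $p_t>0$, $\theta_t>0$, $\beta_t>0$ and functions $u_t,e_t:[0,\infty)\to\mathbb{R}$ such that: $u_t$ is continuous, increasing and strictly concave, differentiable on $(0,\infty)$, and $u_t':(0,\infty)\to(0,\infty)$ is a strictly decreasing bijection with inverse $u_t'^{-1}$; $e_t$ is increasing, strictly convex and continuously differentiable, and $e_t':[0,\infty)\to[0,\infty)$ is a strictly increasing bijection with inverse $e_t'^{-1}$. For $0\le z\le x\le 1$ let $\tilde f_t(x,z)=\theta_t u_t(x)-\beta_t e_t((x-z)c_t)-p_t c_t z$ and $\tilde h_t(x,z)=d_t x+r_t z$.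 Problem (P): maximize $\sum_{t=1}^T \tilde f_t(x_t,z_t)-\pi s$ over $x,z\in\mathbb{R}^T$, $s\in\mathbb{R}$, subject to $0\le z_t\le x_t\le 1$ for all $t$, $s\ge 0$, and (C): $s\ge \sum_{t=1}^T\tilde h_t(x_t,z_t)-Q$. A KKT point of (P) consists of a feasible $(x^*,z^*,s^* )$ and nonnegative Lagrange multipliers for all constraints satisfying stationarity of the Lagrangian and complementary slackness; $\lambda^*$ denotes the multiplier of (C) (the shadow price of wireless data). For $\lambda\ge 0$ and $\beta>0$ write $a_t(\beta,\lambda)=\frac{1}{c_t}\,e_t'^{-1}\!\Big(\frac{p_tc_t+r_t\lambda}{\beta c_t}\Big)$ and $X_t(\lambda)=p_tc_t+(d_t+r_t)\lambda$. *)

theory Defs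
  imports "HOL-Analysis.Analysis"
begin

definition strict_convex_on :: "real set \<Rightarrow> (real \<Rightarrow> real) \<Rightarrow> bool" where
  "strict_convex_on S f \<longleftrightarrow> convex S \<and>
     (\<forall>a\<in>S. \<forall>b\<in>S. a \<noteq> b \<longrightarrow> (\<forall>m. 0 < m \<and> m < 1 \<longrightarrow>
        f ((1 - m) * a + m * b) < (1 - m) * f a + m * f b))"

definition strict_concave_on :: "real set \<Rightarrow> (real \<Rightarrow> real) \<Rightarrow> bool" where
  "strict_concave_on S f \<longleftrightarrow> strict_convex_on S (\<lambda>y. - f y)"

definition ftil :: "real \<Rightarrow> real \<Rightarrow> real \<Rightarrow> real \<Rightarrow> (real \<Rightarrow> real) \<Rightarrow> (real \<Rightarrow> real)
                      \<Rightarrow> real \<Rightarrow> real \<Rightarrow> real" where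
  "ftil \<theta> \<beta> c p u e x z = \<theta> * u x - \<beta> * e ((x - z) * c) - p * c * z"

definition htil :: "real \<Rightarrow> real \<Rightarrow> real \<Rightarrow> real \<Rightarrow> real" where
  "htil d r x z = d * x + r * z"

text \<open>Lagrangian: sum f~_t - fee s + lam (s - sum h~_t + Q) + mu s
     + sum_t (alpha_t z_t + gamma_t (x_t - z_t) + delta_t (1 - x_t)).
  Partial derivatives of f~_t are taken on its natural domain (u_t, e_t live on [0,oo)).\<close>
definition kkt_point ::
  "nat \<Rightarrow> real \<Rightarrow> real \<Rightarrow> (nat \<Rightarrow> real) \<Rightarrow> (nat \<Rightarrow> real) \<Rightarrow> (nat \<Rightarrow> real) \<Rightarrow> (nat \<Rightarrow> real)
   \<Rightarrow> (nat \<Rightarrow> real) \<Rightarrow> (nat \<Rightarrow> real) \<Rightarrow> (nat \<Rightarrow> real \<Rightarrow> real) \<Rightarrow> (nat \<Rightarrow> real \<Rightarrow> real)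
   \<Rightarrow> (nat \<Rightarrow> real) \<Rightarrow> (nat \<Rightarrow> real) \<Rightarrow> real \<Rightarrow> real \<Rightarrow> bool" where
  "kkt_point T Q fee d r c p \<theta> \<beta> u e x z s lam \<longleftrightarrow>
     (\<forall>t\<in>{1..T}. 0 \<le> z t \<and> z t \<le> x t \<and> x t \<le> 1) \<and> 0 \<le> s \<and>
     s \<ge> (\<Sum>t=1..T. htil (d t) (r t) (x t) (z t)) - Q \<and>
     0 \<le> lam \<and>
     (\<exists>mu alpha gamma delta.
        0 \<le> mu \<and>
        - fee + lam + mu = 0 \<and>
        mu * s = 0 \<and>
        lam * (s - (\<Sum>t=1..T. htil (d t) (r t) (x t) (z t)) + Q) = 0 \<and>
        (\<forall>t\<in>{1..T}. 0 \<le> alpha t \<and> 0 \<le> gamma t \<and> 0 \<le> delta t \<and>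
           alpha t * z t = 0 \<and> gamma t * (x t - z t) = 0 \<and> delta t * (1 - x t) = 0 \<and>
           (\<exists>Dx Dz.
              ((\<lambda>\<xi>. ftil (\<theta> t) (\<beta> t) (c t) (p t) (u t) (e t) \<xi> (z t))
                  has_real_derivative Dx) (at (x t) within {z t..}) \<and>
              ((\<lambda>\<zeta>. ftil (\<theta> t) (\<beta> t) (c t) (p t) (u t) (e t) (x t) \<zeta>)
                  has_real_derivative Dz) (at (z t) within {..x t}) \<and>
              Dx - lam * d t + gamma t - delta t = 0 \<and>
              Dz - lam * r t + alpha t - gamma t = 0)))"

definition a_fun :: "real \<Rightarrow> real \<Rightarrow> real \<Rightarrow> real \<Rightarrow> (real \<Rightarrow> real) \<Rightarrow> real \<Rightarrow> real \<Rightarrow> real" where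
  "a_fun c p r d e' \<beta> lam = (1 / c) * inv_into {0..} e' ((p * c + r * lam) / (\<beta> * c))"

definition X_fun :: "real \<Rightarrow> real \<Rightarrow> real \<Rightarrow> real \<Rightarrow> real \<Rightarrow> real" where
  "X_fun c p r d lam = p * c + (d + r) * lam"

definition Omega_IV :: "real \<Rightarrow> real \<Rightarrow> real \<Rightarrow> real \<Rightarrow> (real \<Rightarrow> real) \<Rightarrow> (real \<Rightarrow> real)
                         \<Rightarrow> real \<Rightarrow> (real \<times> real) set" where
  "Omega_IV c p r d u' e' lam = {(\<beta>, \<theta>). \<beta> > 0 \<and>
      \<theta> < X_fun c p r d lam / u' (a_fun c p r d e' \<beta> lam) \<and>
      \<theta> \<le> (\<beta> * c * e' c + d * lam) / u' 1}"

definition x_IV :: "real \<Rightarrow> real \<Rightarrow> real \<Rightarrow> real \<Rightarrow> (real \<Rightarrow> real) \<Rightarrow> (real \<Rightarrow> real)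
                     \<Rightarrow> real \<Rightarrow> real" where
  "x_IV \<theta> \<beta> c d u' e' lam =
     (THE \<xi>. 0 < \<xi> \<and> \<xi> \<le> 1 \<and> \<theta> * u' \<xi> - \<beta> * c * e' (\<xi> * c) = d * lam)"

end

theory Submission
  imports Defs
begin

text \<open>Since \<open>u'\<close> blows up at \<open>0\<close>, \<open>u\<close> has no one-sided derivative there, so the
  stationarity condition in \<open>x\<close> forces \<open>x\<^sub>t > 0\<close>. If \<open>z\<^sub>t > 0\<close>, stationarity in \<open>z\<close>
  gives \<open>e'((x\<^sub>t - z\<^sub>t)c\<^sub>t) \<ge> e'(a\<^sub>t c\<^sub>t)\<close>, hence \<open>x\<^sub>t > a\<^sub>t\<close>, and combining both
  stationarity conditions yields \<open>\<theta>\<^sub>t u'(a\<^sub>t) > X\<^sub>t(\<lambda>)\<close>, contradicting the first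
  condition defining \<open>\<Omega>\<^sup>I\<^sup>V\<close>. With \<open>z\<^sub>t = 0\<close> the \<open>x\<close>-stationarity condition is the defining
  equation of \<open>x\<^sup>I\<^sup>V\<close> when \<open>x\<^sub>t < 1\<close>, and the second condition of \<open>\<Omega>\<^sup>I\<^sup>V\<close> turns the
  inequality at \<open>x\<^sub>t = 1\<close> into that equation too; its left-hand side is strictly decreasing,
  so the solution is unique.\<close>

lemma at_within_atLeast_nontrivial: "(a::real) \<le> b \<Longrightarrow> at b within {a..} \<noteq> bot"
  by (metis at_le at_within_Ici_at_right atLeast_subset_iff bot.extremum_uniqueI
      trivial_limit_at_right_real)

lemma at_within_atMost_nontrivial: "(a::real) \<le> b \<Longrightarrow> at a within {..b} \<noteq> bot"
  by (metis at_le at_within_Iic_at_left atMost_subset_iff bot.extremum_uniqueI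
      trivial_limit_at_left_real)

lemma not_has_real_derivative_at_0_if_deriv_unbounded:
  fixes u u' :: "real \<Rightarrow> real"
  assumes cont: "continuous_on {0..} u"
    and deriv: "\<And>y. y > 0 \<Longrightarrow> (u has_real_derivative u' y) (at y)"
    and unbounded: "\<And>M. \<exists>y>0. M < u' y"
    and decreasing: "\<And>a b. 0 < a \<Longrightarrow> a < b \<Longrightarrow> u' b < u' a"
  shows "\<not> (u has_real_derivative D) (at 0 within {0..})"
proof
  assume "(u has_real_derivative D) (at 0 within {0..})"
  then have "((\<lambda>y. (u y - u 0) / (y - 0)) \<longlongrightarrow> D) (at_right 0)"
    by (simp add: has_field_derivative_iff at_within_Ici_at_right)
  then have small: "eventually (\<lambda>y. (u y - u 0) / (y - 0) < D + 1) (at_right 0)"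
    by (rule order_tendstoD) simp
  obtain y0 where y0: "y0 > 0" "D + 1 < u' y0" using unbounded by blast
  have near: "eventually (\<lambda>y. 0 < y \<and> y < y0) (at_right (0::real))"
    using y0(1) unfolding eventually_at_right_field by (auto intro: exI[of _ y0])
  have "eventually (\<lambda>y. False) (at_right (0::real))"
    using small near
  proof eventually_elim
    case (elim y)
    have "continuous_on {0..y} u" using cont by (rule continuous_on_subset) auto
    moreover have "\<And>w. 0 < w \<Longrightarrow> w < y \<Longrightarrow> u differentiable at w"
      using deriv real_differentiable_def by blast
    ultimately obtain l w where w: "0 < w" "w < y" "(u has_real_derivative l) (at w)"
      and mvt: "u y - u 0 = (y - 0) * l"
      using MVT[of 0 y u] elim by blast
    have "l = u' w" using DERIV_unique[OF w(3) deriv[OF w(1)]] .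
    also have "\<dots> > u' y0" using decreasing[OF w(1), of y0] w elim by auto
    finally have "(u y - u 0) / (y - 0) > D + 1" using mvt y0 elim by auto
    with elim show ?case by auto
  qed
  then show False by simp
qed

lemma DERIV_chain_atLeast_0:
  fixes e e' g :: "real \<Rightarrow> real"
  assumes "\<And>y. y \<ge> 0 \<Longrightarrow> (e has_real_derivative e' y) (at y within {0..})"
    and "(g has_real_derivative G) (at x within S)"
    and "g ` S \<subseteq> {0..}" and "g x \<ge> 0"
  shows "((\<lambda>\<xi>. e (g \<xi>)) has_real_derivative e' (g x) * G) (at x within S)"
  using DERIV_image_chain[OF DERIV_subset[OF assms(1)[OF assms(4)] assms(3)] assms(2)]
  by (simp add: o_def)

lemma ftil_partial_fst_imp_u_derivative:
  assumes e_deriv: "\<And>y. y \<ge> 0 \<Longrightarrow> (e has_real_derivative e' y) (at y within {0..})"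
    and "0 \<le> c" "z \<le> x" "\<theta> \<noteq> 0"
    and "((\<lambda>\<xi>. ftil \<theta> \<beta> c p u e \<xi> z) has_real_derivative D) (at x within {z..})"
  shows "(u has_real_derivative (D + \<beta> * c * e' ((x - z) * c)) / \<theta>) (at x within {z..})"
proof -
  have "((\<lambda>\<xi>. (\<xi> - z) * c) has_real_derivative c) (at x within {z..})"
    by (auto intro!: derivative_eq_intros)
  then have "((\<lambda>\<xi>. e ((\<xi> - z) * c)) has_real_derivative e' ((x - z) * c) * c) (at x within {z..})"
    using assms by (intro DERIV_chain_atLeast_0[OF e_deriv]) auto
  then have "((\<lambda>\<xi>. (ftil \<theta> \<beta> c p u e \<xi> z + \<beta> * e ((\<xi> - z) * c) + p * c * z) / \<theta>)
      has_real_derivative (D + \<beta> * (e' ((x - z) * c) * c) + 0) / \<theta>) (at x within {z..})"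
    using assms(5) by (intro DERIV_cdivide DERIV_add DERIV_cmult DERIV_const)
  moreover have "(\<lambda>\<xi>. (ftil \<theta> \<beta> c p u e \<xi> z + \<beta> * e ((\<xi> - z) * c) + p * c * z) / \<theta>) = u"
    using \<open>\<theta> \<noteq> 0\<close> by (auto simp: ftil_def)
  ultimately show ?thesis by (simp add: algebra_simps)
qed

lemma ftil_partial_fst_eq:
  assumes "(u has_real_derivative u' x) (at x)"
    and "\<And>y. y \<ge> 0 \<Longrightarrow> (e has_real_derivative e' y) (at y within {0..})"
    and "0 \<le> c" "z \<le> x" "\<theta> \<noteq> 0"
    and "((\<lambda>\<xi>. ftil \<theta> \<beta> c p u e \<xi> z) has_real_derivative D) (at x within {z..})"
  shows "D = \<theta> * u' x - \<beta> * c * e' ((x - z) * c)"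
proof -
  have "(D + \<beta> * c * e' ((x - z) * c)) / \<theta> = u' x"
    using has_field_derivative_unique ftil_partial_fst_imp_u_derivative[OF assms(2-6)]
      has_field_derivative_at_within[OF assms(1)] at_within_atLeast_nontrivial[OF assms(4)]
    by blast
  with \<open>\<theta> \<noteq> 0\<close> show ?thesis by (simp add: field_simps)
qed

lemma ftil_partial_snd_eq:
  assumes e_deriv: "\<And>y. y \<ge> 0 \<Longrightarrow> (e has_real_derivative e' y) (at y within {0..})"
    and "0 \<le> c" "z \<le> x"
    and D: "((\<lambda>\<zeta>. ftil \<theta> \<beta> c p u e x \<zeta>) has_real_derivative D) (at z within {..x})"
  shows "D = \<beta> * c * e' ((x - z) * c) - p * c"
proof -
  have "((\<lambda>\<zeta>. (x - \<zeta>) * c) has_real_derivative - c) (at z within {..x})"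
    by (auto intro!: derivative_eq_intros)
  then have "((\<lambda>\<zeta>. e ((x - \<zeta>) * c)) has_real_derivative e' ((x - z) * c) * - c) (at z within {..x})"
    using assms by (intro DERIV_chain_atLeast_0[OF e_deriv]) auto
  then have "((\<lambda>\<zeta>. ftil \<theta> \<beta> c p u e x \<zeta>) has_real_derivative
      0 - \<beta> * (e' ((x - z) * c) * - c) - p * c * 1) (at z within {..x})"
    unfolding ftil_def by (intro DERIV_diff DERIV_cmult DERIV_const DERIV_ident)
  then show ?thesis
    using has_field_derivative_unique[OF D _ at_within_atMost_nontrivial[OF \<open>z \<le> x\<close>]] by simp
qed

lemma ftil_partial_fst_imp_pos:
  assumes "continuous_on {0..} u"
    and "\<And>y. y > 0 \<Longrightarrow> (u has_real_derivative u' y) (at y)"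
    and "\<And>M. \<exists>y>0. M < u' y"
    and "\<And>a b. 0 < a \<Longrightarrow> a < b \<Longrightarrow> u' b < u' a"
    and "\<And>y. y \<ge> 0 \<Longrightarrow> (e has_real_derivative e' y) (at y within {0..})"
    and "0 \<le> c" "0 \<le> z" "z \<le> x" "\<theta> \<noteq> 0"
    and "((\<lambda>\<xi>. ftil \<theta> \<beta> c p u e \<xi> z) has_real_derivative D) (at x within {z..})"
  shows "0 < x"
proof (rule ccontr)
  assume "\<not> 0 < x"
  with assms have "x = 0" "z = 0" by auto
  with ftil_partial_fst_imp_u_derivative[OF assms(5-6,8-10)]
    not_has_real_derivative_at_0_if_deriv_unbounded[OF assms(1-4)]
  show False by auto
qed

lemma bij_betw_strict_mono_on_atLeast_0_zero:
  fixes f :: "real \<Rightarrow> real"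
  assumes "bij_betw f {0..} {0..}" "strict_mono_on {0..} f"
  shows "f 0 = 0"
proof -
  obtain w where "w \<ge> 0" "f w = 0"
    using assms(1) unfolding bij_betw_def by (metis atLeast_iff image_iff order_refl)
  moreover have "f 0 \<ge> 0" using assms(1) unfolding bij_betw_def by auto
  moreover have "w > 0 \<Longrightarrow> f 0 < f w" using assms(2) by (auto simp: strict_mono_on_def)
  ultimately show ?thesis by force
qed

lemma a_fun_pos_and_e':
  fixes e' :: "real \<Rightarrow> real"
  assumes "bij_betw e' {0..} {0..}" "strict_mono_on {0..} e'"
    and "c > 0" "p > 0" "\<beta> > 0" "r \<ge> 0" "lam \<ge> 0"
  shows "0 < a_fun c p r d e' \<beta> lam"
    and "e' (a_fun c p r d e' \<beta> lam * c) = (p * c + r * lam) / (\<beta> * c)"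
proof -
  define v where "v = (p * c + r * lam) / (\<beta> * c)"
  have "v > 0" unfolding v_def using assms by (auto intro!: divide_pos_pos add_pos_nonneg)
  then have v: "v \<in> e' ` {0..}" using assms(1) by (auto simp: bij_betw_def)
  have a: "a_fun c p r d e' \<beta> lam * c = inv_into {0..} e' v"
    unfolding a_fun_def v_def using assms by simp
  show "e' (a_fun c p r d e' \<beta> lam * c) = (p * c + r * lam) / (\<beta> * c)"
    unfolding a v_def[symmetric] by (rule f_inv_into_f[OF v])
  have "inv_into {0..} e' v \<noteq> 0"
    using f_inv_into_f[OF v] \<open>v > 0\<close> bij_betw_strict_mono_on_atLeast_0_zero[OF assms(1,2)] by auto
  then have "inv_into {0..} e' v > 0" using inv_into_into[OF v] by auto
  then show "0 < a_fun c p r d e' \<beta> lam" using a \<open>c > 0\<close> by (metis zero_less_mult_pos2)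
qed

lemma stationary_z_eq_0:
  fixes u' e' :: "real \<Rightarrow> real"
  assumes u'_dec: "\<And>a b. 0 < a \<Longrightarrow> a < b \<Longrightarrow> u' b < u' a"
    and e'_inc: "strict_mono_on {0..} e'"
    and "0 \<le> z" "z \<le> x" "c > 0" "\<theta> > 0" "\<beta> > 0"
    and "0 \<le> \<alpha>" "0 \<le> \<gamma>" "0 \<le> \<delta>" "\<alpha> * z = 0" "\<gamma> * (x - z) = 0"
    and stat_x: "\<theta> * u' x - \<beta> * c * e' ((x - z) * c) = lam * d - \<gamma> + \<delta>"
    and stat_z: "\<beta> * c * e' ((x - z) * c) = p * c + lam * r + \<gamma> - \<alpha>"
    and "a > 0" and e'_a: "e' (a * c) = (p * c + r * lam) / (\<beta> * c)"
    and Omega: "\<theta> * u' a < p * c + (d + r) * lam"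
  shows "z = 0"
proof (rule ccontr)
  assume "z \<noteq> 0"
  with assms have "z > 0" "\<alpha> = 0" by auto
  with stat_z assms have "e' (a * c) \<le> e' ((x - z) * c)"
    by (simp add: e'_a pos_divide_le_eq algebra_simps)
  moreover have "e' ((x - z) * c) < e' (a * c)" if "(x - z) * c < a * c"
    using that assms by (intro strict_mono_onD[OF e'_inc]) auto
  ultimately have "a * c \<le> (x - z) * c" by force
  then have "a \<le> x - z" using \<open>c > 0\<close> by simp
  then have "\<gamma> = 0" using assms by auto
  with stat_x stat_z \<open>\<alpha> = 0\<close> \<open>0 \<le> \<delta>\<close> have "p * c + (d + r) * lam \<le> \<theta> * u' x"
    by (simp add: algebra_simps)
  moreover have "u' x < u' a" using u'_dec[OF \<open>a > 0\<close>] \<open>a \<le> x - z\<close> \<open>z > 0\<close> by simp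
  then have "\<theta> * u' x < \<theta> * u' a" using \<open>\<theta> > 0\<close> by simp
  ultimately show False using Omega by simp
qed

lemma x_IV_eqI:
  fixes u' e' :: "real \<Rightarrow> real"
  assumes u'_dec: "\<And>a b. 0 < a \<Longrightarrow> a < b \<Longrightarrow> u' b < u' a"
    and e'_inc: "strict_mono_on {0..} e'"
    and "c > 0" "\<theta> > 0" "\<beta> > 0"
    and x: "0 < x" "x \<le> 1" "\<theta> * u' x - \<beta> * c * e' (x * c) = d * lam"
  shows "x_IV \<theta> \<beta> c d u' e' lam = x"
  unfolding x_IV_def
proof (rule the_equality)
  have decreasing: "\<theta> * u' b - \<beta> * c * e' (b * c) < \<theta> * u' a - \<beta> * c * e' (a * c)"
    if "0 < a" "a < b" for a b
  proof -
    have "\<theta> * u' b < \<theta> * u' a" using u'_dec[OF that] \<open>\<theta> > 0\<close> by simp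
    moreover have "e' (a * c) < e' (b * c)"
      using e'_inc that \<open>c > 0\<close> by (auto simp: strict_mono_on_def)
    then have "\<beta> * c * e' (a * c) < \<beta> * c * e' (b * c)" using \<open>c > 0\<close> \<open>\<beta> > 0\<close> by simp
    ultimately show ?thesis by linarith
  qed
  fix \<xi> assume "0 < \<xi> \<and> \<xi> \<le> 1 \<and> \<theta> * u' \<xi> - \<beta> * c * e' (\<xi> * c) = d * lam"
  with x decreasing[of \<xi> x] decreasing[of x \<xi>] show "\<xi> = x"
    by (cases "\<xi> < x"; cases "x < \<xi>") auto
qed (use x in auto)

lemma Omega_IV_memD:
  assumes "(\<beta>, \<theta>) \<in> Omega_IV c p r d u' e' lam"
    and "u' (a_fun c p r d e' \<beta> lam) > 0" "u' 1 > 0"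
  shows "\<theta> * u' (a_fun c p r d e' \<beta> lam) < p * c + (d + r) * lam"
    and "\<theta> * u' 1 \<le> \<beta> * c * e' c + d * lam"
  using assms by (simp_all add: Omega_IV_def X_fun_def pos_less_divide_eq pos_le_divide_eq)

lemma kkt_unit_box_stationary_eq:
  fixes g :: "real \<Rightarrow> real"
  assumes "0 < x" "x \<le> 1" "\<gamma> * x = 0" "0 \<le> \<delta>" "\<delta> * (1 - x) = 0"
    and "g x = b - \<gamma> + \<delta>" "g 1 \<le> b"
  shows "g x = b"
proof (cases "x < 1")
  case True
  with assms show ?thesis by simp
next
  case False
  with assms show ?thesis by simp
qed

lemma kkt_point_period_stationaryE:
  fixes u' e' :: "real \<Rightarrow> real"
  assumes kkt: "kkt_point T Q fee d r c p \<theta> \<beta> u e x z s lam" and t: "t \<in> {1..T}"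
    and u_cont: "continuous_on {0..} (u t)"
    and u_deriv: "\<And>y. y > 0 \<Longrightarrow> (u t has_real_derivative u' y) (at y)"
    and u'_unbounded: "\<And>M. \<exists>y>0. M < u' y"
    and u'_dec: "\<And>a b. 0 < a \<Longrightarrow> a < b \<Longrightarrow> u' b < u' a"
    and e_deriv: "\<And>y. y \<ge> 0 \<Longrightarrow> (e t has_real_derivative e' y) (at y within {0..})"
    and "0 \<le> c t" "\<theta> t \<noteq> 0"
  obtains \<alpha> \<gamma> \<delta> where
    "0 \<le> z t" "z t \<le> x t" "x t \<le> 1" "0 < x t" "0 \<le> lam"
    "0 \<le> \<alpha>" "0 \<le> \<gamma>" "0 \<le> \<delta>" "\<alpha> * z t = 0" "\<gamma> * (x t - z t) = 0" "\<delta> * (1 - x t) = 0"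
    "\<theta> t * u' (x t) - \<beta> t * c t * e' ((x t - z t) * c t) = lam * d t - \<gamma> + \<delta>"
    "\<beta> t * c t * e' ((x t - z t) * c t) = p t * c t + lam * r t + \<gamma> - \<alpha>"
proof -
  obtain \<alpha> \<gamma> \<delta> Dx Dz where feas: "0 \<le> z t" "z t \<le> x t" "x t \<le> 1" "0 \<le> lam"
    and mult: "0 \<le> \<alpha>" "0 \<le> \<gamma>" "0 \<le> \<delta>" "\<alpha> * z t = 0" "\<gamma> * (x t - z t) = 0" "\<delta> * (1 - x t) = 0"
    and Dx: "((\<lambda>\<xi>. ftil (\<theta> t) (\<beta> t) (c t) (p t) (u t) (e t) \<xi> (z t))
        has_real_derivative Dx) (at (x t) within {z t..})"
    and Dz: "((\<lambda>\<zeta>. ftil (\<theta> t) (\<beta> t) (c t) (p t) (u t) (e t) (x t) \<zeta>)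
        has_real_derivative Dz) (at (z t) within {..x t})"
    and stat: "Dx - lam * d t + \<gamma> - \<delta> = 0" "Dz - lam * r t + \<alpha> - \<gamma> = 0"
    using kkt t unfolding kkt_point_def by blast
  have x_pos: "0 < x t"
    by (rule ftil_partial_fst_imp_pos[OF u_cont u_deriv u'_unbounded u'_dec e_deriv
          \<open>0 \<le> c t\<close> feas(1,2) \<open>\<theta> t \<noteq> 0\<close> Dx])
  have "Dx = \<theta> t * u' (x t) - \<beta> t * c t * e' ((x t - z t) * c t)"
    by (rule ftil_partial_fst_eq[where u'=u', OF u_deriv[OF x_pos] e_deriv \<open>0 \<le> c t\<close> feas(2) \<open>\<theta> t \<noteq> 0\<close> Dx])
  moreover have "Dz = \<beta> t * c t * e' ((x t - z t) * c t) - p t * c t"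
    by (rule ftil_partial_snd_eq[OF e_deriv \<open>0 \<le> c t\<close> feas(2) Dz])
  ultimately show thesis
    using that[OF feas(1-3) x_pos feas(4) mult] stat by linarith
qed

theorem lemma4:
  fixes T :: nat and Q fee :: real
    and d r c p \<theta> \<beta> :: "nat \<Rightarrow> real"
    and u e u' e' :: "nat \<Rightarrow> real \<Rightarrow> real"
    and x z :: "nat \<Rightarrow> real" and s lam :: real
  assumes T: "T \<ge> 1" and Q: "Q > 0" and fee_pos: "fee > 0"
    and par: "\<And>t. t \<in> {1..T} \<Longrightarrow>
       d t \<ge> 0 \<and> r t \<ge> 0 \<and> c t > 0 \<and> p t > 0 \<and> \<theta> t > 0 \<and> \<beta> t > 0"
    and u_cont: "\<And>t. t \<in> {1..T} \<Longrightarrow> continuous_on {0..} (u t)"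
    and u_mono: "\<And>t. t \<in> {1..T} \<Longrightarrow> mono_on {0..} (u t)"
    and u_conc: "\<And>t. t \<in> {1..T} \<Longrightarrow> strict_concave_on {0..} (u t)"
    and u_deriv: "\<And>t y. t \<in> {1..T} \<Longrightarrow> y > 0 \<Longrightarrow> (u t has_real_derivative u' t y) (at y)"
    and u'_bij: "\<And>t. t \<in> {1..T} \<Longrightarrow> bij_betw (u' t) {0<..} {0<..}"
    and u'_dec: "\<And>t a b. t \<in> {1..T} \<Longrightarrow> 0 < a \<Longrightarrow> a < b \<Longrightarrow> u' t b < u' t a"
    and e_mono: "\<And>t. t \<in> {1..T} \<Longrightarrow> mono_on {0..} (e t)"
    and e_conv: "\<And>t. t \<in> {1..T} \<Longrightarrow> strict_convex_on {0..} (e t)"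
    and e_deriv: "\<And>t y. t \<in> {1..T} \<Longrightarrow> y \<ge> 0 \<Longrightarrow>
                     (e t has_real_derivative e' t y) (at y within {0..})"
    and e'_cont: "\<And>t. t \<in> {1..T} \<Longrightarrow> continuous_on {0..} (e' t)"
    and e'_bij: "\<And>t. t \<in> {1..T} \<Longrightarrow> bij_betw (e' t) {0..} {0..}"
    and e'_inc: "\<And>t. t \<in> {1..T} \<Longrightarrow> strict_mono_on {0..} (e' t)"
    and kkt: "kkt_point T Q fee d r c p \<theta> \<beta> u e x z s lam"
  shows "\<forall>t\<in>{1..T}.
           (\<beta> t, \<theta> t) \<in> Omega_IV (c t) (p t) (r t) (d t) (u' t) (e' t) lam \<longrightarrow>
           x t = x_IV (\<theta> t) (\<beta> t) (c t) (d t) (u' t) (e' t) lam \<and> z t = 0"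
proof (intro ballI impI)
  fix t assume t: "t \<in> {1..T}"
    and Omega: "(\<beta> t, \<theta> t) \<in> Omega_IV (c t) (p t) (r t) (d t) (u' t) (e' t) lam"
  have par_t: "d t \<ge> 0" "r t \<ge> 0" "c t > 0" "p t > 0" "\<theta> t > 0" "\<beta> t > 0"
    using par[OF t] by auto
  have u'_range: "u' t ` {0<..} = {0<..}" using u'_bij[OF t] by (simp add: bij_betw_def)
  then have u'_pos: "u' t y > 0" if "y > 0" for y
    using that by auto
  have u'_unbounded: "\<exists>y>0. M < u' t y" for M
    using u'_range[THEN equalityD2, THEN subsetD, of "max M 0 + 1"] by force
  obtain \<alpha> \<gamma> \<delta> where feas: "0 \<le> z t" "z t \<le> x t" "x t \<le> 1" "0 < x t" "0 \<le> lam"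
    and mult: "0 \<le> \<alpha>" "0 \<le> \<gamma>" "0 \<le> \<delta>" "\<alpha> * z t = 0" "\<gamma> * (x t - z t) = 0" "\<delta> * (1 - x t) = 0"
    and stat_x: "\<theta> t * u' t (x t) - \<beta> t * c t * e' t ((x t - z t) * c t) = lam * d t - \<gamma> + \<delta>"
    and stat_z: "\<beta> t * c t * e' t ((x t - z t) * c t) = p t * c t + lam * r t + \<gamma> - \<alpha>"
    by (rule kkt_point_period_stationaryE[OF kkt t u_cont[OF t] u_deriv[OF t]
          u'_unbounded u'_dec[OF t] e_deriv[OF t]]) (use par_t in auto)
  define a where "a = a_fun (c t) (p t) (r t) (d t) (e' t) (\<beta> t) lam"
  have a_pos: "0 < a" and e'_a: "e' t (a * c t) = (p t * c t + r t * lam) / (\<beta> t * c t)"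
    unfolding a_def using a_fun_pos_and_e'[OF e'_bij[OF t] e'_inc[OF t]] par_t feas by auto
  have Omega_a: "\<theta> t * u' t a < p t * c t + (d t + r t) * lam"
    and Omega_1: "\<theta> t * u' t 1 \<le> \<beta> t * c t * e' t (c t) + d t * lam"
    using Omega_IV_memD[OF Omega] u'_pos[OF a_pos] u'_pos[of 1] by (simp_all add: a_def)
  have z0: "z t = 0"
    by (rule stationary_z_eq_0[OF u'_dec[OF t] e'_inc[OF t] feas(1,2) par_t(3,5,6) mult(1-5)
          stat_x stat_z a_pos e'_a Omega_a])
  have stat_x0: "\<theta> t * u' t (x t) - \<beta> t * c t * e' t (x t * c t) = d t * lam - \<gamma> + \<delta>"
    using stat_x unfolding z0 by (simp add: mult.commute[of lam])
  have "\<theta> t * u' t (x t) - \<beta> t * c t * e' t (x t * c t) = d t * lam"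
    by (rule kkt_unit_box_stationary_eq[where g="\<lambda>\<xi>. \<theta> t * u' t \<xi> - \<beta> t * c t * e' t (\<xi> * c t)",
          OF feas(4,3) _ mult(3,6) stat_x0]) (use mult(5) z0 Omega_1 in simp_all)
  with x_IV_eqI[OF u'_dec[OF t] e'_inc[OF t] par_t(3,5,6) feas(4,3)] z0
  show "x t = x_IV (\<theta> t) (\<beta> t) (c t) (d t) (u' t) (e' t) lam \<and> z t = 0" by simp
qed

end
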